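(* Let $\mathbb{F}\in\{\mathbb{R},\mathbb{C}\}$, $\boldsymbol A\in\mathbb{F}^{m\times n}$, $k\in\{1,\dots,n\}$, and suppose there exist a map $\Delta:\mathbb{R}^m\to\mathbb{F}^n$ and $c_0>0$ with $\mathrm{dist}(\Delta(|\boldsymbol A\boldsymbol x|),\boldsymbol x)\le c_0\,\sigma_k(\boldsymbol x)_2$ for all $\boldsymbol x\in\mathbb{F}^n$. Then for every $\boldsymbol\eta\in\mathbb{F}^n$ with $\boldsymbol A\boldsymbol\eta=\boldsymbol 0$ and every $T\subset\{1,\dots,n\}$ with $\#T\le 2k$, \[ \|\boldsymbol\eta\|_2\le c_0\,\sigma_{2k}(\boldsymbol\eta)_2\le c_0\,\|\boldsymbol\eta_{T^c}\|_2 . \]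
   Context: $|\boldsymbol u|$ is the entrywise modulus. $\mathrm{dist}(\boldsymbol x,\boldsymbol y)=\min_{c\in\mathbb F,|c|=1}\|\boldsymbol x-c\boldsymbol y\|_2$. $\Sigma_s=\{\boldsymbol z\in\mathbb F^n:\|\boldsymbol z\|_0\le s\}$, $\sigma_s(\boldsymbol x)_2=\min_{\boldsymbol z\in\Sigma_s}\mathrm{dist}(\boldsymbol x,\boldsymbol z)$. For $T\subset\{1,\dots,n\}$, $\boldsymbol\eta_{T}$ is the vector agreeing with $\boldsymbol\eta$ on $T$ and zero elsewhere, and $T^c$ is the complement of $T$. *)

theory Defs
  imports "HOL-Analysis.Analysis"
begin

definition vabs :: "'a::real_normed_field ^ 'm \<Rightarrow> real ^ 'm" where
  "vabs v = (\<chi> i. norm (v $ i))"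

text \<open>Phase-invariant distance: min over unimodular scalars c of the Euclidean norm of x - c y.
  (The minimum is attained; we write it as an infimum.)\<close>
definition pdist :: "'a::real_normed_field ^ 'n \<Rightarrow> 'a ^ 'n \<Rightarrow> real" where
  "pdist x y = (INF c \<in> {c::'a. norm c = 1}. norm (x - c *s y))"

definition sparse_set :: "nat \<Rightarrow> ('a::zero ^ 'n) set" where
  "sparse_set s = {z. card {i. z $ i \<noteq> 0} \<le> s}"

definition sigma_err :: "nat \<Rightarrow> 'a::real_normed_field ^ 'n \<Rightarrow> real" where
  "sigma_err s x = (INF z \<in> sparse_set s. pdist x z)"

definition restr :: "'n set \<Rightarrow> 'a::zero ^ 'n \<Rightarrow> 'a ^ 'n" where
  "restr T v = (\<chi> i. if i \<in> T then v $ i else 0)"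

end

theory Submission
  imports Defs
begin

text \<open>If \<open>A \<eta> = 0\<close>, split \<open>\<eta> = u + v\<close> with \<open>u\<close> the restriction of \<open>\<eta>\<close> to at most \<open>k\<close> indices
  of \<open>T\<close>. Then \<open>A u = - A v\<close>, so the measurements \<open>|A u|\<close> and \<open>|A v|\<close> coincide and the decoder
  returns the same \<open>z\<close> for both. Since \<open>u\<close> is \<open>k\<close>-sparse, \<open>z\<close> is a phase multiple of \<open>u\<close>; since
  \<open>v\<close> has at most \<open>k\<close> entries inside \<open>T\<close>, \<open>z\<close> is within \<open>c\<^sub>0 \<sigma>\<^sub>k(v) \<le> c\<^sub>0 \<parallel>restr (- T) \<eta>\<parallel>\<close> of a phase
  multiple of \<open>v\<close>. As \<open>u\<close> and \<open>v\<close> have disjoint supports, \<open>\<parallel>\<eta>\<parallel> = \<parallel>c u - d v\<parallel>\<close> for all unimodular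
  \<open>c, d\<close>, and the triangle inequality through \<open>z\<close> gives \<open>\<parallel>\<eta>\<parallel> \<le> c\<^sub>0 \<parallel>restr (- T) \<eta>\<parallel>\<close>. Taking for \<open>T\<close>
  the support of an arbitrary \<open>2k\<close>-sparse vector yields the bound by \<open>c\<^sub>0 \<sigma>\<^bsub>2k\<^esub>(\<eta>)\<close>.\<close>

lemma unimodular_nonempty: "{c::'a::real_normed_field. norm c = 1} \<noteq> {}"
  using norm_one by blast

lemma pdist_bdd_below:
  "bdd_below ((\<lambda>c. norm (x - c *s y)) ` {c::'a::real_normed_field. norm c = 1})"
  by (rule bdd_belowI[where m = 0]) auto

lemma pdist_le_norm:
  fixes x y :: "'a::real_normed_field ^ 'n"
  shows "norm c = 1 \<Longrightarrow> pdist x y \<le> norm (x - c *s y)"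
  unfolding pdist_def by (rule cINF_lower[OF pdist_bdd_below]) auto

lemma pdist_greatest:
  fixes x y :: "'a::real_normed_field ^ 'n"
  assumes "\<And>c. norm c = 1 \<Longrightarrow> b \<le> norm (x - c *s y)"
  shows "b \<le> pdist x y"
  unfolding pdist_def using assms by (intro cINF_greatest[OF unimodular_nonempty]) auto

lemma pdist_nonneg: "0 \<le> pdist (x::'a::real_normed_field ^ 'n) y"
  by (rule pdist_greatest) simp

lemma pdist_self: "pdist (x::'a::real_normed_field ^ 'n) x = 0"
  using pdist_le_norm[of 1 x x] pdist_nonneg[of x x] by simp

lemma norm_restr_compl_support_le_pdist:
  fixes x y :: "'a::real_normed_field ^ 'n::finite"
  shows "norm (restr (- {i. y $ i \<noteq> 0}) x) \<le> pdist x y"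
  by (intro pdist_greatest norm_le_componentwise_cart) (auto simp: restr_def)

lemma restr_in_sparse_set:
  fixes v :: "'a::zero ^ 'n::finite"
  assumes "card T \<le> s"
  shows "restr T v \<in> sparse_set s"
proof -
  have "card {i. restr T v $ i \<noteq> 0} \<le> card T"
    by (intro card_mono) (auto simp: restr_def)
  with assms show ?thesis by (simp add: sparse_set_def)
qed

lemma restr_add_restr_compl: "restr T v + restr (- T) v = (v::'a::monoid_add ^ 'n)"
  by (simp add: restr_def vec_eq_iff)

lemma restr_restr: "restr S (restr T v) = restr (S \<inter> T) v"
  by (simp add: restr_def vec_eq_iff)

lemma sigma_err_le_pdist:
  fixes x :: "'a::real_normed_field ^ 'n"
  shows "z \<in> sparse_set s \<Longrightarrow> sigma_err s x \<le> pdist x z"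
  unfolding sigma_err_def by (rule cINF_lower) (auto intro!: bdd_belowI[where m = 0] pdist_nonneg)

lemma sigma_err_greatest:
  fixes x :: "'a::real_normed_field ^ 'n::finite"
  assumes "\<And>z. z \<in> sparse_set s \<Longrightarrow> b \<le> pdist x z"
  shows "b \<le> sigma_err s x"
proof -
  have "restr {} x \<in> sparse_set s" by (rule restr_in_sparse_set) simp
  then show ?thesis
    unfolding sigma_err_def using assms by (intro cINF_greatest) auto
qed

lemma sigma_err_le_norm_restr_compl:
  fixes x :: "'a::real_normed_field ^ 'n::finite"
  assumes "card T \<le> s"
  shows "sigma_err s x \<le> norm (restr (- T) x)"
proof -
  have "sigma_err s x \<le> pdist x (restr T x)"
    by (intro sigma_err_le_pdist restr_in_sparse_set assms)
  also have "\<dots> \<le> norm (x - 1 *s restr T x)" by (rule pdist_le_norm) simp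
  also have "x - 1 *s restr T x = restr (- T) x" by (simp add: restr_def vec_eq_iff)
  finally show ?thesis .
qed

lemma sigma_err_eq_0_if_sparse:
  fixes x :: "'a::real_normed_field ^ 'n"
  assumes "x \<in> sparse_set s"
  shows "sigma_err s x = 0"
proof -
  have "sigma_err s x \<le> 0" using sigma_err_le_pdist[OF assms, of x] by (simp add: pdist_self)
  moreover have "0 \<le> sigma_err s x"
    unfolding sigma_err_def using assms by (intro cINF_greatest) (auto simp: pdist_nonneg)
  ultimately show ?thesis by simp
qed

lemma vabs_eq_if_null_sum:
  fixes A :: "'a::real_normed_field ^ 'n ^ 'm"
  assumes "A *v (u + v) = 0"
  shows "vabs (A *v u) = vabs (A *v v)"
proof -
  have "A *v u = - (A *v v)"
    using assms by (simp add: matrix_vector_right_distrib eq_neg_iff_add_eq_0)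
  then show ?thesis by (simp add: vabs_def)
qed

text \<open>Only the moduli of the entries enter \<open>\<parallel>c u - d v\<parallel>\<close> when \<open>u\<close> and \<open>v\<close> have disjoint supports.\<close>

lemma norm_add_le_pdist_add_pdist:
  fixes u v z :: "'a::real_normed_field ^ 'n::finite"
  assumes disjoint: "\<And>i. u $ i = 0 \<or> v $ i = 0"
  shows "norm (u + v) \<le> pdist z u + pdist z v"
proof -
  have "norm (u + v) - pdist z u \<le> norm (z - d *s v)" if d: "norm d = 1" for d
  proof -
    have "norm (u + v) - norm (z - d *s v) \<le> norm (z - c *s u)" if c: "norm c = 1" for c
    proof -
      have "norm ((u + v) $ i) = norm ((c *s u - d *s v) $ i)" for i
        using disjoint[of i] c d by (auto simp: norm_mult)
      then have "norm (u + v) = norm (c *s u - d *s v)" by (simp add: norm_vec_def)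
      also have "\<dots> \<le> norm (z - c *s u) + norm (z - d *s v)"
        using norm_triangle_ineq4[of "z - d *s v" "z - c *s u"] by simp
      finally show ?thesis by simp
    qed
    then have "norm (u + v) - norm (z - d *s v) \<le> pdist z u" by (rule pdist_greatest)
    then show ?thesis by simp
  qed
  then have "norm (u + v) - pdist z u \<le> pdist z v" by (rule pdist_greatest)
  then show ?thesis by simp
qed

lemma null_space_property_of_instance_optimal:
  fixes A :: "'a::real_normed_field ^ 'n::finite ^ 'm::finite"
    and \<Delta> :: "real ^ 'm \<Rightarrow> 'a ^ 'n"
  assumes optimal: "\<And>x. pdist (\<Delta> (vabs (A *v x))) x \<le> c0 * sigma_err k x"
    and "c0 \<ge> 0" and "A *v \<eta> = 0" and "card T \<le> 2 * k"
  shows "norm \<eta> \<le> c0 * norm (restr (- T) \<eta>)"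
proof -
  obtain T1 where T1: "T1 \<subseteq> T" "card T1 = min k (card T)"
    using obtain_subset_with_card_n[of "min k (card T)" T] by auto
  define u where "u = restr T1 \<eta>"
  define v where "v = restr (- T1) \<eta>"
  define z where "z = \<Delta> (vabs (A *v u))"
  have "u + v = \<eta>" unfolding u_def v_def by (rule restr_add_restr_compl)
  then have "z = \<Delta> (vabs (A *v v))"
    using vabs_eq_if_null_sum[of A u v] \<open>A *v \<eta> = 0\<close> by (simp add: z_def)
  have "sigma_err k u = 0"
    unfolding u_def using T1 by (intro sigma_err_eq_0_if_sparse restr_in_sparse_set) simp
  then have z_u: "pdist z u \<le> 0" using optimal[of u] by (simp add: z_def)
  have "card (T - T1) \<le> k"
    using T1 \<open>card T \<le> 2 * k\<close> finite[of T] by (simp add: card_Diff_subset)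
  then have "sigma_err k v \<le> norm (restr (- (T - T1)) v)"
    by (rule sigma_err_le_norm_restr_compl)
  also have "restr (- (T - T1)) v = restr (- T) \<eta>"
  proof -
    have "- (T - T1) \<inter> - T1 = - T" using T1 by blast
    then show ?thesis by (simp add: v_def restr_restr)
  qed
  finally have sigma_v: "sigma_err k v \<le> norm (restr (- T) \<eta>)" .
  have z_v: "pdist z v \<le> c0 * norm (restr (- T) \<eta>)"
  proof -
    have "pdist z v \<le> c0 * sigma_err k v"
      using optimal[of v] \<open>z = \<Delta> (vabs (A *v v))\<close> by simp
    also have "\<dots> \<le> c0 * norm (restr (- T) \<eta>)"
      using sigma_v \<open>c0 \<ge> 0\<close> by (rule mult_left_mono)
    finally show ?thesis .
  qed
  have "norm \<eta> \<le> pdist z u + pdist z v"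
    unfolding \<open>u + v = \<eta>\<close>[symmetric] by (rule norm_add_le_pdist_add_pdist) (simp add: u_def v_def restr_def)
  with z_u z_v show ?thesis by simp
qed

lemma norm_le_sigma_err_if_null_space_property:
  fixes x :: "'a::real_normed_field ^ 'n::finite"
  assumes "c0 > 0" and nsp: "\<And>T. card T \<le> s \<Longrightarrow> norm x \<le> c0 * norm (restr (- T) x)"
  shows "norm x \<le> c0 * sigma_err s x"
proof -
  have "norm x / c0 \<le> sigma_err s x"
  proof (rule sigma_err_greatest)
    fix y :: "'a ^ 'n" assume "y \<in> sparse_set s"
    then have "norm x \<le> c0 * norm (restr (- {i. y $ i \<noteq> 0}) x)"
      by (intro nsp) (simp add: sparse_set_def)
    also have "\<dots> \<le> c0 * pdist x y"
      using \<open>c0 > 0\<close> norm_restr_compl_support_le_pdist by (simp add: mult_left_mono)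
    finally show "norm x / c0 \<le> pdist x y" using \<open>c0 > 0\<close> by (simp add: field_simps)
  qed
  then show ?thesis using \<open>c0 > 0\<close> by (simp add: field_simps)
qed

lemma null_space_bounds_of_instance_optimal:
  fixes A :: "'a::real_normed_field ^ 'n::finite ^ 'm::finite"
    and \<Delta> :: "real ^ 'm \<Rightarrow> 'a ^ 'n"
  assumes "\<And>x. pdist (\<Delta> (vabs (A *v x))) x \<le> c0 * sigma_err k x"
    and "c0 > 0" and "A *v \<eta> = 0" and "card T \<le> 2 * k"
  shows "norm \<eta> \<le> c0 * sigma_err (2 * k) \<eta> \<and>
    c0 * sigma_err (2 * k) \<eta> \<le> c0 * norm (restr (- T) \<eta>)"
proof
  show "norm \<eta> \<le> c0 * sigma_err (2 * k) \<eta>"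
    using assms
    by (intro norm_le_sigma_err_if_null_space_property null_space_property_of_instance_optimal) auto
  show "c0 * sigma_err (2 * k) \<eta> \<le> c0 * norm (restr (- T) \<eta>)"
    using assms by (simp add: sigma_err_le_norm_restr_compl)
qed

theorem mainTheorem6:
  fixes dummy_m :: "'m::finite itself" and dummy_n :: "'n::finite itself"
  shows
  "(\<forall>(A :: real ^ 'n ^ 'm) (k::nat) (\<Delta> :: real ^ 'm \<Rightarrow> real ^ 'n) (c0::real).
      1 \<le> k \<and> k \<le> CARD('n) \<and> c0 > 0 \<and>
      (\<forall>x :: real ^ 'n. pdist (\<Delta> (vabs (A *v x))) x \<le> c0 * sigma_err k x) \<longrightarrow>
      (\<forall>(\<eta> :: real ^ 'n) (T :: 'n set). A *v \<eta> = 0 \<and> card T \<le> 2 * k \<longrightarrow>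
         norm \<eta> \<le> c0 * sigma_err (2 * k) \<eta> \<and>
         c0 * sigma_err (2 * k) \<eta> \<le> c0 * norm (restr (- T) \<eta>)))
   \<and>
   (\<forall>(A :: complex ^ 'n ^ 'm) (k::nat) (\<Delta> :: real ^ 'm \<Rightarrow> complex ^ 'n) (c0::real).
      1 \<le> k \<and> k \<le> CARD('n) \<and> c0 > 0 \<and>
      (\<forall>x :: complex ^ 'n. pdist (\<Delta> (vabs (A *v x))) x \<le> c0 * sigma_err k x) \<longrightarrow>
      (\<forall>(\<eta> :: complex ^ 'n) (T :: 'n set). A *v \<eta> = 0 \<and> card T \<le> 2 * k \<longrightarrow>
         norm \<eta> \<le> c0 * sigma_err (2 * k) \<eta> \<and>
         c0 * sigma_err (2 * k) \<eta> \<le> c0 * norm (restr (- T) \<eta>)))"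
  by (rule conjI; intro allI impI; elim conjE; metis null_space_bounds_of_instance_optimal)

end
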